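(* For a given temporal graph $G$ on $n$ vertices with lifetime $L$, one can build a temporal $\lfloor\log n\rfloor$-spanner $H$ of $G$ of size $O(Ln)$.
   Context: A temporal graph is an undirected graph $G=(V,E)$ with a labeling $\lambda:E\to\mathbb{N}^+$; its lifetime $L$ is the number of distinct labels used. A temporal path is a path whose traversed edges have non-decreasing labels in the order of traversal; its length is its number of edges, and $d_G(u,v)$ is the minimum length of a temporal path from $u$ to $v$ in $G$ ($+\infty$ if none). A temporal $\alpha$-spanner of $G$ is a subgraph $H$ with $V(H)=V$, $E(H)\subseteq E$ (same labels), such that $d_H(u,v)\le\alpha\, d_G(u,v)$ for all $u,v\in V$. Size means number of edges. *)

theory Defs
  imports Complex_Main "HOL-Library.Extended_Nat"
begin

definition temporal_graph :: "'a set \<Rightarrow> 'a set set \<Rightarrow> ('a set \<Rightarrow> nat) \<Rightarrow> bool" where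
  "temporal_graph V E lam \<longleftrightarrow> finite V \<and>
     E \<subseteq> {e. \<exists>a b. e = {a, b} \<and> a \<noteq> b \<and> a \<in> V \<and> b \<in> V} \<and>
     (\<forall>e\<in>E. lam e > 0)"

definition lifetime :: "'a set set \<Rightarrow> ('a set \<Rightarrow> nat) \<Rightarrow> nat" where
  "lifetime E lam = card (lam ` E)"

definition path_edges :: "'a list \<Rightarrow> 'a set list" where
  "path_edges xs = map2 (\<lambda>a b. {a, b}) xs (tl xs)"

definition temporal_path :: "'a set set \<Rightarrow> ('a set \<Rightarrow> nat) \<Rightarrow> 'a list \<Rightarrow> bool" where
  "temporal_path E lam xs \<longleftrightarrow> xs \<noteq> [] \<and> distinct xs \<and>
     set (path_edges xs) \<subseteq> E \<and> sorted (map lam (path_edges xs))"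

text \<open>Temporal distance (infinity if no temporal path).\<close>
definition temporal_dist :: "'a set set \<Rightarrow> ('a set \<Rightarrow> nat) \<Rightarrow> 'a \<Rightarrow> 'a \<Rightarrow> enat" where
  "temporal_dist E lam u v =
     (INF xs \<in> {xs. temporal_path E lam xs \<and> hd xs = u \<and> last xs = v}. enat (length xs - 1))"

definition temporal_spanner :: "'a set \<Rightarrow> 'a set set \<Rightarrow> ('a set \<Rightarrow> nat) \<Rightarrow> nat \<Rightarrow> 'a set set \<Rightarrow> bool" where
  "temporal_spanner V E lam \<alpha> H \<longleftrightarrow> H \<subseteq> E \<and>
     (\<forall>u\<in>V. \<forall>v\<in>V. temporal_dist E lam u v \<noteq> \<infinity> \<longrightarrow>
        temporal_dist H lam u v \<le> enat \<alpha> * temporal_dist E lam u v)"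

end

(*
  Treat each label class separately.  In the static graph of the edges with
  label l, grow a BFS ball around some vertex until it stops expanding by a factor 16, say
  at radius r; keep the BFS tree of the next ball, delete the inner ball and recurse.  This
  keeps at most 16 n edges and replaces every edge by a walk of at most 2r + 1 edges with
  16^r <= n, i.e. of at most log n edges.  Replacing every edge of a temporal path by such a
  walk of its own label keeps the labels sorted, and cutting out the cycles of the resulting
  walk gives a temporal path at most log n times as long.  The union over the L label classes
  has at most 16 L n edges.
*)
theory Submission
  imports Defs
begin

lemma path_edges_Nil [simp]: "path_edges [] = []"
  by (simp add: path_edges_def)

lemma path_edges_singleton [simp]: "path_edges [a] = []"
  by (simp add: path_edges_def)

lemma path_edges_Cons_Cons [simp]: "path_edges (a # b # xs) = {a, b} # path_edges (b # xs)"
  by (simp add: path_edges_def)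

lemma path_edges_append_Cons:
  "path_edges (xs @ y # ys) = path_edges (xs @ [y]) @ path_edges (y # ys)"
  by (induction xs rule: induct_list012) auto

lemma path_edges_rev: "path_edges (rev xs) = rev (path_edges xs)"
proof (induction xs rule: induct_list012)
  case (3 x y zs)
  have "path_edges (rev (x # y # zs)) = path_edges (rev zs @ [y]) @ path_edges [y, x]"
    using path_edges_append_Cons[of "rev zs" y "[x]"] by simp
  then show ?case using 3 by (simp add: insert_commute)
qed simp_all

lemma path_edges_join:
  assumes "xs \<noteq> []" "ys \<noteq> []" "last xs = hd ys"
  shows "path_edges (xs @ tl ys) = path_edges xs @ path_edges ys"
proof -
  obtain y ys' where ys: "ys = y # ys'" using assms(2) by (cases ys) auto
  have xs: "xs = butlast xs @ [y]" using assms(1,3) ys append_butlast_last_id by fastforce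
  have "path_edges (xs @ tl ys) = path_edges (butlast xs @ y # ys')"
    using xs ys by (metis append_Cons append_assoc list.sel(3) self_append_conv2)
  also have "\<dots> = path_edges xs @ path_edges ys"
    using path_edges_append_Cons xs ys by metis
  finally show ?thesis .
qed

text \<open>A walk is a vertex list, so it has one edge fewer than its length.\<close>
definition walk :: "'a set set \<Rightarrow> 'a list \<Rightarrow> 'a \<Rightarrow> 'a \<Rightarrow> bool" where
  "walk S ws a b \<longleftrightarrow> ws \<noteq> [] \<and> set (path_edges ws) \<subseteq> S \<and> hd ws = a \<and> last ws = b"

lemma walk_singleton: "walk S [a] a a"
  by (simp add: walk_def)

lemma walk_Cons:
  assumes "walk S ws u b" "{w, u} \<in> S"
  shows "walk S (w # ws) w b"
proof -
  have "ws = u # tl ws" using assms(1) by (auto simp: walk_def)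
  then show ?thesis using assms by (metis walk_def path_edges_Cons_Cons insert_subset
        last_ConsR list.distinct(1) list.sel(1) list.set(2))
qed

lemma walk_join:
  assumes "walk S xs a b" "walk S ys b c"
  shows "walk S (xs @ tl ys) a c"
proof -
  have ne: "xs \<noteq> []" "ys \<noteq> []" and glue: "last xs = hd ys" using assms by (auto simp: walk_def)
  have "last (xs @ tl ys) = last ys"
    using ne glue by (cases ys) auto
  then show ?thesis using assms path_edges_join[OF ne glue] by (auto simp: walk_def)
qed

lemma walk_rev: "walk S ws a b \<Longrightarrow> walk S (rev ws) b a"
  by (auto simp: walk_def path_edges_rev hd_rev last_rev)

lemma walk_mono: "walk S ws a b \<Longrightarrow> S \<subseteq> S' \<Longrightarrow> walk S' ws a b"
  by (auto simp: walk_def)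

lemma sorted_walk_shortcut:
  assumes "walk H xs a b" "sorted (map lam (path_edges xs))"
  shows "\<exists>ys. temporal_path H lam ys \<and> hd ys = a \<and> last ys = b \<and> length ys \<le> length xs"
  using assms
proof (induction "length xs" arbitrary: xs rule: less_induct)
  case less
  show ?case
  proof (cases "distinct xs")
    case True
    then show ?thesis using less.prems by (auto simp: temporal_path_def walk_def)
  next
    case False
    then obtain p q s y where xs: "xs = p @ [y] @ q @ [y] @ s" using not_distinct_decomp by blast
    define xs' where "xs' = p @ [y] @ s"
    have edges_xs: "path_edges xs = path_edges (p @ [y]) @ path_edges (y # q @ [y]) @ path_edges (y # s)"
      using xs path_edges_append_Cons[of p y "q @ [y] @ s"] path_edges_append_Cons[of "y # q" y s]
      by simp
    have edges_xs': "path_edges xs' = path_edges (p @ [y]) @ path_edges (y # s)"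
      using path_edges_append_Cons[of p y s] by (simp add: xs'_def)
    have "walk H xs' a b"
      using less.prems(1) xs edges_xs edges_xs' by (cases p; cases s rule: rev_cases) (auto simp: walk_def xs'_def)
    moreover have "sorted (map lam (path_edges xs'))"
      using less.prems(2) unfolding edges_xs edges_xs' by (simp add: sorted_append)
    moreover have "length xs' < length xs" using xs by (simp add: xs'_def)
    ultimately show ?thesis using less.hyps by fastforce
  qed
qed

lemma temporal_dist_le:
  "temporal_path H lam ys \<Longrightarrow> temporal_dist H lam (hd ys) (last ys) \<le> enat (length ys - 1)"
  unfolding temporal_dist_def by (intro INF_lower) auto

lemma temporal_dist_attained:
  assumes "temporal_dist E lam u v \<noteq> \<infinity>"
  shows "\<exists>xs. temporal_path E lam xs \<and> hd xs = u \<and> last xs = v \<and>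
    temporal_dist E lam u v = enat (length xs - 1)"
proof -
  let ?len = "\<lambda>xs. enat (length xs - 1)"
  let ?P = "{xs. temporal_path E lam xs \<and> hd xs = u \<and> last xs = v}"
  have "?len ` ?P \<noteq> {}"
  proof
    assume "?len ` ?P = {}"
    then have "temporal_dist E lam u v = \<infinity>"
      unfolding temporal_dist_def top_enat_def[symmetric] by (simp only: Inf_empty)
    with assms show False ..
  qed
  then have "Inf (?len ` ?P) \<in> ?len ` ?P"
    unfolding Inf_enat_def by (auto intro: LeastI)
  then show ?thesis by (auto simp: temporal_dist_def)
qed

lemma exists_slow_growth_step:
  fixes f :: "nat \<Rightarrow> nat"
  assumes "1 \<le> f 0" "\<And>i. f i \<le> n" "2 \<le> k"
  shows "\<exists>r. f (Suc r) \<le> k * f r \<and> k ^ r \<le> f r"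
proof -
  have fast: "k ^ i \<le> f i" if "\<forall>j<i. k * f j < f (Suc j)" for i
    using that
  proof (induction i)
    case (Suc i)
    then have "k * k ^ i \<le> k * f i" by simp
    also have "\<dots> < f (Suc i)" using Suc.prems by simp
    finally show ?case by simp
  qed (use assms(1) in simp)
  have "\<exists>r. f (Suc r) \<le> k * f r"
  proof (rule ccontr)
    assume "\<not> ?thesis"
    then have "k ^ n \<le> n" using fast[of n] assms(2)[of n] by (meson le_trans not_le)
    moreover have "n < 2 ^ n" by (rule less_exp)
    moreover have "(2::nat) ^ n \<le> k ^ n" using assms(3) by (rule power_mono) simp
    ultimately show False by linarith
  qed
  define r where "r = (LEAST r. f (Suc r) \<le> k * f r)"
  have "f (Suc r) \<le> k * f r"
    unfolding r_def by (rule LeastI_ex) fact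
  moreover have "k * f j < f (Suc j)" if "j < r" for j
    using not_less_Least[OF that[unfolded r_def]] by simp
  ultimately show ?thesis using fast by blast
qed

definition nbhd :: "'a set set \<Rightarrow> 'a set \<Rightarrow> 'a set" where
  "nbhd E A = A \<union> {w. \<exists>u\<in>A. {u, w} \<in> E}"

definition hop_ball :: "'a set set \<Rightarrow> 'a \<Rightarrow> nat \<Rightarrow> 'a set" where
  "hop_ball E x i = (nbhd E ^^ i) {x}"

lemma hop_ball_0 [simp]: "hop_ball E x 0 = {x}"
  by (simp add: hop_ball_def)

lemma hop_ball_Suc: "hop_ball E x (Suc i) = nbhd E (hop_ball E x i)"
  by (simp add: hop_ball_def)

lemma hop_ball_mono: "i \<le> j \<Longrightarrow> hop_ball E x i \<subseteq> hop_ball E x j"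
  by (rule lift_Suc_mono_le[of "hop_ball E x"]) (auto simp: hop_ball_Suc nbhd_def)

lemma center_in_hop_ball: "x \<in> hop_ball E x i"
  using hop_ball_mono[of 0 i] by auto

lemma hop_ball_subset:
  assumes "\<Union>E \<subseteq> V" "x \<in> V"
  shows "hop_ball E x i \<subseteq> V"
  by (induction i) (use assms in \<open>auto simp: hop_ball_Suc nbhd_def\<close>)

lemma card_Un_image_Diff_less:
  assumes "finite B'" "B \<subseteq> B'" "card T < card B"
  shows "card (T \<union> f ` (B' - B)) < card B'"
proof -
  have "card (T \<union> f ` (B' - B)) \<le> card T + card (f ` (B' - B))" by (rule card_Un_le)
  also have "\<dots> \<le> card T + card (B' - B)" using card_image_le[of "B' - B" f] assms(1) by simp
  also have "card (B' - B) = card B' - card B"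
    using card_Diff_subset[OF finite_subset[OF assms(2,1)] assms(2)] .
  finally show ?thesis using assms(3) card_mono[OF assms(1,2)] by linarith
qed

lemma bfs_tree:
  assumes "finite (hop_ball E x k)"
  shows "\<exists>T\<subseteq>E. card T < card (hop_ball E x k) \<and>
    (\<forall>j\<le>k. \<forall>w\<in>hop_ball E x j. \<exists>ws. walk T ws w x \<and> length ws \<le> j + 1)"
  using assms
proof (induction k)
  case 0
  show ?case by (intro exI[of _ "{}"]) (auto intro: walk_singleton)
next
  case (Suc k)
  let ?B = "hop_ball E x"
  have sub: "?B k \<subseteq> ?B (Suc k)" by (rule hop_ball_mono) simp
  then have "finite (?B k)" using Suc.prems finite_subset by blast
  then obtain T where T: "T \<subseteq> E" "card T < card (?B k)"
    and reach: "\<forall>j\<le>k. \<forall>w\<in>?B j. \<exists>ws. walk T ws w x \<and> length ws \<le> j + 1"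
    using Suc.IH by blast
  define new where "new = ?B (Suc k) - ?B k"
  have "\<forall>w\<in>new. \<exists>u. u \<in> ?B k \<and> {u, w} \<in> E"
    by (auto simp: new_def hop_ball_Suc nbhd_def)
  then obtain parent where parent: "\<forall>w\<in>new. parent w \<in> ?B k \<and> {parent w, w} \<in> E"
    by metis
  define T' where "T' = T \<union> (\<lambda>w. {w, parent w}) ` new"
  have "T' \<subseteq> E" using T(1) parent by (auto simp: T'_def insert_commute)
  moreover have "card T' < card (?B (Suc k))"
    unfolding T'_def new_def using card_Un_image_Diff_less[OF Suc.prems sub T(2)] .
  moreover have "\<exists>ws. walk T' ws w x \<and> length ws \<le> j + 1"
    if j: "j \<le> Suc k" and w: "w \<in> ?B j" for j w
  proof -
    have mono: "walk T' ws w x" if "walk T ws w x" for ws w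
      using walk_mono[OF that] by (auto simp: T'_def)
    consider "j \<le> k" | "j = Suc k" "w \<in> ?B k" | "j = Suc k" "w \<in> new"
      using j w by (auto simp: new_def le_Suc_eq)
    then show ?thesis
    proof cases
      case 1
      then show ?thesis using reach w mono by blast
    next
      case 2
      then show ?thesis using reach mono by fastforce
    next
      case 3
      then obtain ws where ws: "walk T ws (parent w) x" "length ws \<le> k + 1"
        using reach parent by blast
      have "{w, parent w} \<in> T'" using 3 by (auto simp: T'_def)
      then have "walk T' (w # ws) w x" by (rule walk_Cons[OF mono[OF ws(1)]])
      moreover have "length (w # ws) \<le> Suc k + 1" using ws(2) by simp
      ultimately show ?thesis using 3 by blast
    qed
  qed
  ultimately show ?case by blast
qed

definition short_detours :: "'a set set \<Rightarrow> 'a set set \<Rightarrow> nat \<Rightarrow> bool" where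
  "short_detours S E n \<longleftrightarrow> (\<forall>a b. {a, b} \<in> E \<longrightarrow>
     (\<exists>ws r. walk S ws a b \<and> length ws \<le> 2 * r + 2 \<and> 16 ^ r \<le> n))"

lemma short_detours_mono:
  assumes "short_detours S E n" "S \<subseteq> S'" "E' \<subseteq> E" "n \<le> n'"
  shows "short_detours S' E' n'"
  using assms walk_mono unfolding short_detours_def by (meson order_trans subsetD)

lemma short_detours_Un:
  "short_detours S E\<^sub>1 n \<Longrightarrow> short_detours S E\<^sub>2 n \<Longrightarrow> short_detours S (E\<^sub>1 \<union> E\<^sub>2) n"
  unfolding short_detours_def by blast

lemma low_stretch_cluster:
  assumes "finite V" "\<Union>E \<subseteq> V" "x \<in> V"
  shows "\<exists>C T. x \<in> C \<and> C \<subseteq> V \<and> T \<subseteq> E \<and> card T \<le> 16 * card C \<and>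
    short_detours T {e \<in> E. e \<inter> C \<noteq> {}} (card C)"
proof -
  let ?B = "hop_ball E x"
  have ball_V: "?B i \<subseteq> V" for i using hop_ball_subset assms(2,3) .
  then have fin: "finite (?B i)" for i using assms(1) finite_subset by blast
  obtain r where r: "card (?B (Suc r)) \<le> 16 * card (?B r)" "16 ^ r \<le> card (?B r)"
    using exists_slow_growth_step[of "\<lambda>i. card (?B i)" "card V" 16]
      card_mono[OF assms(1) ball_V] by auto
  obtain T where T: "T \<subseteq> E" "card T < card (?B (Suc r))"
    and reach: "\<forall>j\<le>Suc r. \<forall>w\<in>?B j. \<exists>ws. walk T ws w x \<and> length ws \<le> j + 1"
    using bfs_tree[OF fin[of "Suc r"]] by blast
  have edge_walk: "\<exists>ws. walk T ws a b \<and> length ws \<le> 2 * r + 2"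
    if ab: "{a, b} \<in> E" and a: "a \<in> ?B r" for a b
  proof -
    have "b \<in> ?B (Suc r)" using ab a by (auto simp: hop_ball_Suc nbhd_def)
    then obtain wb where wb: "walk T wb b x" "length wb \<le> r + 2"
      using reach[rule_format, of "Suc r" b] by auto
    obtain wa where wa: "walk T wa a x" "length wa \<le> r + 1"
      using reach[rule_format, of r a] a by auto
    have "walk T (wa @ tl (rev wb)) a b"
      using walk_join[OF wa(1) walk_rev[OF wb(1)]] .
    moreover have "length (wa @ tl (rev wb)) \<le> 2 * r + 2" using wa(2) wb(2) by simp
    ultimately show ?thesis by blast
  qed
  have "short_detours T {e \<in> E. e \<inter> ?B r \<noteq> {}} (card (?B r))"
    unfolding short_detours_def
  proof (intro allI impI)
    fix a b assume ab: "{a, b} \<in> {e \<in> E. e \<inter> ?B r \<noteq> {}}"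
    have "\<exists>ws. walk T ws a b \<and> length ws \<le> 2 * r + 2"
    proof (cases "a \<in> ?B r")
      case True
      then show ?thesis using edge_walk ab by blast
    next
      case False
      then have "b \<in> ?B r" "{b, a} \<in> E" using ab by (auto simp: insert_commute)
      then show ?thesis using edge_walk walk_rev by fastforce
    qed
    then show "\<exists>ws r'. walk T ws a b \<and> length ws \<le> 2 * r' + 2 \<and> 16 ^ r' \<le> card (?B r)"
      using r(2) by blast
  qed
  moreover have "card T \<le> 16 * card (?B r)" using T(2) r(1) by linarith
  ultimately show ?thesis
    using center_in_hop_ball ball_V T(1) by (intro exI[of _ "?B r"] exI[of _ T]) simp
qed

lemma sparse_spanner:
  assumes "finite V" "\<Union>E \<subseteq> V"
  shows "\<exists>S\<subseteq>E. card S \<le> 16 * card V \<and> short_detours S E (card V)"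
  using assms
proof (induction "card V" arbitrary: V E rule: less_induct)
  case less
  show ?case
  proof (cases "\<Union>E = {}")
    case True
    then show ?thesis by (intro exI[of _ "{}"]) (auto simp: short_detours_def)
  next
    case False
    then obtain x where "x \<in> V" using less.prems(2) by blast
    from low_stretch_cluster[OF less.prems this] obtain C T where C: "x \<in> C" "C \<subseteq> V"
      and T: "T \<subseteq> E" "card T \<le> 16 * card C"
      and near: "short_detours T {e \<in> E. e \<inter> C \<noteq> {}} (card C)"
      by blast
    define E' where "E' = {e \<in> E. e \<inter> C = {}}"
    have "card (V - C) < card V"
      using C \<open>x \<in> V\<close> less.prems(1) by (intro psubset_card_mono) auto
    moreover have "finite (V - C)" "\<Union>E' \<subseteq> V - C"
      using less.prems by (auto simp: E'_def)
    ultimately obtain S' where S': "S' \<subseteq> E'" "card S' \<le> 16 * card (V - C)"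
      and far: "short_detours S' E' (card (V - C))"
      using less.hyps[of "V - C" E'] by blast
    have card_V: "card V = card (V - C) + card C"
      using card_Diff_subset[OF finite_subset[OF C(2) less.prems(1)] C(2)]
        card_mono[OF less.prems(1) C(2)] by linarith
    have "short_detours (S' \<union> T) (E' \<union> {e \<in> E. e \<inter> C \<noteq> {}}) (card V)"
      by (intro short_detours_Un short_detours_mono[OF far] short_detours_mono[OF near])
        (use card_V in auto)
    moreover have "E' \<union> {e \<in> E. e \<inter> C \<noteq> {}} = E" by (auto simp: E'_def)
    moreover have "card (S' \<union> T) \<le> 16 * card V"
      using card_Un_le[of S' T] S'(2) T(2) card_V by linarith
    moreover have "S' \<union> T \<subseteq> E" using S'(1) T(1) by (auto simp: E'_def)
    ultimately show ?thesis by (intro exI[of _ "S' \<union> T"]) simp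
  qed
qed

lemma odd_le_floor_log:
  assumes "2 \<le> n" "16 ^ r \<le> n"
  shows "2 * r + 1 \<le> nat \<lfloor>log 2 (real n)\<rfloor>"
proof -
  have "(2::nat) ^ (4 * r) \<le> n" using assms(2) by (simp add: power_mult)
  then have "4 * r \<le> nat \<lfloor>log 2 (real n)\<rfloor>"
    using le_log2_of_power le_nat_floor by blast
  moreover have "1 \<le> nat \<lfloor>log 2 (real n)\<rfloor>"
    using le_log2_of_power[of n 1] assms(1) le_nat_floor by fastforce
  ultimately show ?thesis by linarith
qed

lemma sparse_spanner_log_stretch:
  assumes "finite V" "\<Union>E \<subseteq> V"
  shows "\<exists>S\<subseteq>E. card S \<le> 16 * card V \<and> (\<forall>a b. {a, b} \<in> E \<longrightarrow>
    (\<exists>ws. walk S ws a b \<and> length ws \<le> nat \<lfloor>log 2 (real (card V))\<rfloor> + 1))"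
proof -
  obtain S where S: "S \<subseteq> E" "card S \<le> 16 * card V"
    and stretch: "short_detours S E (card V)"
    using sparse_spanner[OF assms] by blast
  have "\<exists>ws. walk S ws a b \<and> length ws \<le> nat \<lfloor>log 2 (real (card V))\<rfloor> + 1"
    if ab: "{a, b} \<in> E" for a b
  proof (cases "a = b")
    case True
    then show ?thesis using walk_singleton by fastforce
  next
    case False
    have "card {a, b} \<le> card V" using ab assms by (intro card_mono) auto
    then have "2 \<le> card V" using False by simp
    moreover obtain ws r where "walk S ws a b" "length ws \<le> 2 * r + 2" "16 ^ r \<le> card V"
      using stretch ab unfolding short_detours_def by blast
    ultimately show ?thesis using odd_le_floor_log[of "card V" r] by fastforce
  qed
  then show ?thesis using S by blast
qed

definition same_label_detours :: "'a set set \<Rightarrow> ('a set \<Rightarrow> 'b) \<Rightarrow> nat \<Rightarrow> 'a set set \<Rightarrow> bool" where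
  "same_label_detours E lam t H \<longleftrightarrow> (\<forall>a b. {a, b} \<in> E \<longrightarrow>
     (\<exists>ws. walk H ws a b \<and> length ws \<le> t + 1 \<and> (\<forall>f\<in>set (path_edges ws). lam f = lam {a, b})))"

lemma sorted_walk_via_detours:
  fixes lam :: "'a set \<Rightarrow> 'b::linorder"
  assumes detours: "same_label_detours E lam t H"
    and "xs \<noteq> []" "set (path_edges xs) \<subseteq> E" "sorted (map lam (path_edges xs))"
  shows "\<exists>W. walk H W (hd xs) (last xs) \<and> sorted (map lam (path_edges W)) \<and>
    lam ` set (path_edges W) \<subseteq> lam ` set (path_edges xs) \<and> length W - 1 \<le> t * (length xs - 1)"
  using assms(2-)
proof (induction xs rule: induct_list012)
  case (2 x)
  show ?case by (intro exI[of _ "[x]"]) (simp add: walk_singleton)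
next
  case (3 a b zs)
  have ab: "{a, b} \<in> E" and rest: "set (path_edges (b # zs)) \<subseteq> E"
    and lab_le: "\<forall>l\<in>set (map lam (path_edges (b # zs))). lam {a, b} \<le> l"
    and sorted_rest: "sorted (map lam (path_edges (b # zs)))"
    using "3.prems" by auto
  obtain W where W: "walk H W b (last (b # zs))" "sorted (map lam (path_edges W))"
      "lam ` set (path_edges W) \<subseteq> lam ` set (path_edges (b # zs))"
      "length W - 1 \<le> t * length zs"
    using "3.IH"(2) rest sorted_rest by auto
  obtain ws where ws: "walk H ws a b" "length ws \<le> t + 1"
      "\<forall>f\<in>set (path_edges ws). lam f = lam {a, b}"
    using detours ab unfolding same_label_detours_def by blast
  have ne: "ws \<noteq> []" "W \<noteq> []" "last ws = hd W" using ws(1) W(1) by (auto simp: walk_def)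
  have edges: "path_edges (ws @ tl W) = path_edges ws @ path_edges W"
    by (rule path_edges_join[OF ne])
  have "sorted (map lam (path_edges ws) @ map lam (path_edges W))"
    using ws(3) W(2,3) lab_le by (fastforce simp: sorted_append intro: sorted_iff_nth_mono[THEN iffD2])
  moreover have "length (ws @ tl W) - 1 \<le> t * length (b # zs)"
    using ne ws(2) W(4) by (cases W) auto
  ultimately show ?case
    using walk_join[OF ws(1) W(1)] edges ws(3) W(3) by (intro exI[of _ "ws @ tl W"]) auto
qed simp

lemma temporal_spanner_if_same_label_detours:
  assumes "H \<subseteq> E" "same_label_detours E lam t H"
  shows "temporal_spanner V E lam t H"
  unfolding temporal_spanner_def
proof (intro conjI ballI impI assms(1))
  fix u v assume "u \<in> V" "v \<in> V" and reachable: "temporal_dist E lam u v \<noteq> \<infinity>"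
  obtain xs where xs: "temporal_path E lam xs" "hd xs = u" "last xs = v"
      "temporal_dist E lam u v = enat (length xs - 1)"
    using temporal_dist_attained[OF reachable] by auto
  have "xs \<noteq> []" "set (path_edges xs) \<subseteq> E" "sorted (map lam (path_edges xs))"
    using xs(1) by (auto simp: temporal_path_def)
  from sorted_walk_via_detours[OF assms(2) this] obtain W where W: "walk H W u v"
      "sorted (map lam (path_edges W))" "length W - 1 \<le> t * (length xs - 1)"
    unfolding xs(2,3) by blast
  obtain ys where ys: "temporal_path H lam ys" "hd ys = u" "last ys = v" "length ys \<le> length W"
    using sorted_walk_shortcut[OF W(1,2)] by blast
  have "temporal_dist H lam u v \<le> enat (length ys - 1)"
    using temporal_dist_le[OF ys(1)] ys(2,3) by simp
  also have "\<dots> \<le> enat t * enat (length xs - 1)"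
    using ys(4) W(3) by simp
  finally show "temporal_dist H lam u v \<le> enat t * temporal_dist E lam u v"
    using xs(4) by simp
qed

lemma same_label_sparse_spanner:
  assumes "finite V" "\<Union>E \<subseteq> V"
  shows "\<exists>H\<subseteq>E. card H \<le> 16 * card (lam ` E) * card V \<and>
    same_label_detours E lam (nat \<lfloor>log 2 (real (card V))\<rfloor>) H"
proof -
  let ?t = "nat \<lfloor>log 2 (real (card V))\<rfloor>"
  let ?E = "\<lambda>l. {e \<in> E. lam e = l}"
  let ?spans = "\<lambda>l S. S \<subseteq> ?E l \<and> card S \<le> 16 * card V \<and>
    (\<forall>a b. {a, b} \<in> ?E l \<longrightarrow> (\<exists>ws. walk S ws a b \<and> length ws \<le> ?t + 1))"
  have "\<forall>l. \<exists>S. ?spans l S"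
  proof
    fix l
    have "\<Union>(?E l) \<subseteq> V" using assms(2) by blast
    from sparse_spanner_log_stretch[OF assms(1) this] show "\<exists>S. ?spans l S" by blast
  qed
  from choice[OF this] obtain S where "\<forall>l. ?spans l (S l)" ..
  then have S: "\<And>l. S l \<subseteq> ?E l" "\<And>l. card (S l) \<le> 16 * card V"
    and stretch: "\<And>l a b. {a, b} \<in> ?E l \<Longrightarrow> \<exists>ws. walk (S l) ws a b \<and> length ws \<le> ?t + 1"
    by simp_all
  define H where "H = (\<Union>l\<in>lam ` E. S l)"
  have "finite E" by (rule finite_UnionD) (rule finite_subset[OF assms(2,1)])
  have "card H \<le> (\<Sum>l\<in>lam ` E. card (S l))"
    unfolding H_def using \<open>finite E\<close> by (intro card_UN_le) simp
  also have "\<dots> \<le> (\<Sum>l\<in>lam ` E. 16 * card V)" using S(2) by (rule sum_mono)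
  also have "\<dots> = 16 * card (lam ` E) * card V" by simp
  finally have "card H \<le> 16 * card (lam ` E) * card V" .
  moreover have "H \<subseteq> E" using S(1) by (auto simp: H_def)
  moreover have "same_label_detours E lam ?t H"
    unfolding same_label_detours_def
  proof (intro allI impI)
    fix a b assume ab: "{a, b} \<in> E"
    then obtain ws where ws: "walk (S (lam {a, b})) ws a b" "length ws \<le> ?t + 1"
      using stretch by blast
    have "S (lam {a, b}) \<subseteq> H" using ab by (auto simp: H_def)
    then have "walk H ws a b" by (rule walk_mono[OF ws(1)])
    moreover have "\<forall>f\<in>set (path_edges ws). lam f = lam {a, b}"
      using ws(1) S(1) by (auto simp: walk_def)
    ultimately show "\<exists>ws. walk H ws a b \<and> length ws \<le> ?t + 1 \<and>
        (\<forall>f\<in>set (path_edges ws). lam f = lam {a, b})"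
      using ws(2) by blast
  qed
  ultimately show ?thesis by blast
qed

theorem corollary23:
  shows "\<exists>C::real. \<forall>(V::nat set) E lam. temporal_graph V E lam \<longrightarrow>
     (\<exists>H. temporal_spanner V E lam (nat \<lfloor>log 2 (real (card V))\<rfloor>) H \<and>
          real (card H) \<le> C * real (lifetime E lam) * real (card V))"
proof (intro exI[of _ 16] allI impI)
  fix V :: "nat set" and E lam
  assume "temporal_graph V E lam"
  then have "finite V" and "E \<subseteq> {e. \<exists>a b. e = {a, b} \<and> a \<noteq> b \<and> a \<in> V \<and> b \<in> V}"
    by (simp_all add: temporal_graph_def)
  then have "finite V" "\<Union>E \<subseteq> V" by blast+
  from same_label_sparse_spanner[OF this, of lam] obtain H where H: "H \<subseteq> E"
    and size: "card H \<le> 16 * lifetime E lam * card V"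
    and detours: "same_label_detours E lam (nat \<lfloor>log 2 (real (card V))\<rfloor>) H"
    unfolding lifetime_def by blast
  have "real (card H) \<le> 16 * real (lifetime E lam) * real (card V)"
    using size by (metis of_nat_le_iff of_nat_mult of_nat_numeral)
  then show "\<exists>H. temporal_spanner V E lam (nat \<lfloor>log 2 (real (card V))\<rfloor>) H \<and>
      real (card H) \<le> 16 * real (lifetime E lam) * real (card V)"
    using temporal_spanner_if_same_label_detours[OF H detours] by blast
qed

end
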